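(* For all $(u_1,u_2)\in[0,1)^2$ and all integers $n\ge 0$, $$\big|\lfloor u_1\lfloor nu_2\rfloor\rfloor-\lfloor u_2\lfloor nu_1\rfloor\rfloor\big|\le 1.$$ *)

theory Defs
  imports Complex_Main
begin

end

theory Submission
  imports Defs
begin

text \<open>Both products \<open>u\<^sub>1\<lfloor>n u\<^sub>2\<rfloor>\<close> and \<open>u\<^sub>2\<lfloor>n u\<^sub>1\<rfloor>\<close> approximate \<open>n u\<^sub>1 u\<^sub>2\<close> from below
  with errors less than \<open>u\<^sub>1\<close> and \<open>u\<^sub>2\<close> respectively, hence less than 1; so they
  differ by less than 1, and the floors of two reals that close differ by at most 1.\<close>

lemma floor_diff_abs_le_1:
  fixes p q :: real
  assumes "\<bar>p - q\<bar> < 1"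
  shows "\<bar>\<lfloor>p\<rfloor> - \<lfloor>q\<rfloor>\<bar> \<le> 1"
proof -
  have "\<lfloor>p\<rfloor> - \<lfloor>q\<rfloor> < 2" "\<lfloor>p\<rfloor> - \<lfloor>q\<rfloor> > -2"
    using assms floor_correct[of p] floor_correct[of q] by linarith+
  then show ?thesis by linarith
qed

lemma scaled_floor_bounds:
  fixes u x :: real
  assumes "0 \<le> u"
  shows "u * x - u \<le> u * of_int \<lfloor>x\<rfloor>" and "u * of_int \<lfloor>x\<rfloor> \<le> u * x"
proof -
  have "x - 1 \<le> of_int \<lfloor>x\<rfloor>" "of_int \<lfloor>x\<rfloor> \<le> x" by linarith+
  then have "u * (x - 1) \<le> u * of_int \<lfloor>x\<rfloor>" "u * of_int \<lfloor>x\<rfloor> \<le> u * x"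
    using assms by (simp_all add: mult_left_mono)
  then show "u * x - u \<le> u * of_int \<lfloor>x\<rfloor>" "u * of_int \<lfloor>x\<rfloor> \<le> u * x"
    by (simp_all add: right_diff_distrib)
qed

lemma cross_scaled_floor_close:
  fixes u1 u2 t :: real
  assumes "0 \<le> u1" "u1 < 1" "0 \<le> u2" "u2 < 1"
  shows "\<bar>u1 * of_int \<lfloor>t * u2\<rfloor> - u2 * of_int \<lfloor>t * u1\<rfloor>\<bar> < 1"
proof -
  have same_product: "u1 * (t * u2) = u2 * (t * u1)" by simp
  show ?thesis
    using scaled_floor_bounds[OF assms(1), of "t * u2"]
      scaled_floor_bounds[OF assms(3), of "t * u1"] assms(2,4)
    unfolding abs_less_iff same_product by linarith
qed

theorem lemma2p2:
  fixes u1 u2 :: real and n :: nat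
  assumes "0 \<le> u1" "u1 < 1" "0 \<le> u2" "u2 < 1"
  shows "\<bar>\<lfloor>u1 * of_int \<lfloor>real n * u2\<rfloor>\<rfloor> - \<lfloor>u2 * of_int \<lfloor>real n * u1\<rfloor>\<rfloor>\<bar> \<le> 1"
  using floor_diff_abs_le_1[OF cross_scaled_floor_close[OF assms]] .

end
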